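(* Let $p\ge2$, $n\ge1$, $\alpha>1$ real, and $m\in\{j/p^n:0\le j\le p^n\}$ be fixed, and let $\mathcal{B}_m$ be the set of Boolean functions $f:(\mathbb{Z}/p\mathbb{Z})^n\to\{0,1\}$ with $\mathbb{E} f=m$. (i) There exists $\epsilon_0>0$ such that for every $\epsilon\in(0,\epsilon_0)$, every $f\in\mathcal{B}_m$ maximizing $\mathbb{E}(T_\epsilon f)^\alpha$ over $\mathcal{B}_m$ satisfies $I(f)=\min\{I(g):g\in\mathcal{B}_m\}$. (ii) There exists $\epsilon_1<1-1/p$ such that for every $\epsilon\in(\epsilon_1,1-1/p)$, every $f\in\mathcal{B}_m$ maximizing $\mathbb{E}(T_\epsilon f)^\alpha$ over $\mathcal{B}_m$ satisfies $W_1(f)=\max\{W_1(g):g\in\mathcal{B}_m\}$, where $W_1(f)=\sum_{\xi:\,|\mathrm{supp}(\xi)|=1}|\hat f(\xi)|^2$.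
   Context: $(\mathbb{Z}/p\mathbb{Z})^n$ carries the uniform measure; $X$ is a uniform random element. For $0\le\epsilon\le1-1/p$, the noise operator is $T_\epsilon f(x)=\mathbb{E} f(x+Z)$, where $Z$ has independent coordinates, each equal to $0$ with probability $1-\epsilon$ and to each nonzero element of $\mathbb{Z}/p\mathbb{Z}$ with probability $\epsilon/(p-1)$. Let $e_p(\theta)=e^{2\pi i\theta/p}$, $\hat f(\xi)=\mathbb{E}[f(X)\overline{e_p(\xi\cdot X)}]$, $\mathrm{supp}(\xi)=\{j:\xi_j\ne0\}$. For $j\in[n]$, let $\tilde Z_j$ be uniform on $(\mathbb{Z}/p\mathbb{Z})\setminus\{0\}$ independent of $X$, $\tilde\sigma_j(x)=(x_1,\dots,x_j+\tilde Z_j,\dots,x_n)$, $I_j(f)=\mathbb{P}(f(X)\ne f(\tilde\sigma_j(X)))$, and total influence $I(f)=\sum_jI_j(f)$. *)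

theory Defs
  imports Complex_Main
begin

text \<open>Points of (Z/pZ)^n are represented canonically as functions nat => nat
  with coordinates i < n in {0..<p} and all coordinates i >= n equal to 0.\<close>

definition cube :: "nat \<Rightarrow> nat \<Rightarrow> (nat \<Rightarrow> nat) set" where
  "cube p n = {x. (\<forall>i<n. x i < p) \<and> (\<forall>i. n \<le> i \<longrightarrow> x i = 0)}"

definition vadd :: "nat \<Rightarrow> nat \<Rightarrow> (nat \<Rightarrow> nat) \<Rightarrow> (nat \<Rightarrow> nat) \<Rightarrow> (nat \<Rightarrow> nat)" where
  "vadd p n x z = (\<lambda>i. if i < n then (x i + z i) mod p else 0)"

definition expect :: "nat \<Rightarrow> nat \<Rightarrow> ((nat \<Rightarrow> nat) \<Rightarrow> real) \<Rightarrow> real" where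
  "expect p n f = (\<Sum>x\<in>cube p n. f x) / real p ^ n"

definition noise_weight :: "nat \<Rightarrow> nat \<Rightarrow> real \<Rightarrow> (nat \<Rightarrow> nat) \<Rightarrow> real" where
  "noise_weight p n \<epsilon> z = (\<Prod>i<n. if z i = 0 then 1 - \<epsilon> else \<epsilon> / real (p - 1))"

definition noise_op :: "nat \<Rightarrow> nat \<Rightarrow> real \<Rightarrow> ((nat \<Rightarrow> nat) \<Rightarrow> real) \<Rightarrow> (nat \<Rightarrow> nat) \<Rightarrow> real" where
  "noise_op p n \<epsilon> f x = (\<Sum>z\<in>cube p n. noise_weight p n \<epsilon> z * f (vadd p n x z))"

definition boolfuns :: "nat \<Rightarrow> nat \<Rightarrow> real \<Rightarrow> ((nat \<Rightarrow> nat) \<Rightarrow> real) set" where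
  "boolfuns p n m = {f. (\<forall>x\<in>cube p n. f x \<in> {0, 1}) \<and> (\<forall>x. x \<notin> cube p n \<longrightarrow> f x = 0)
                        \<and> expect p n f = m}"

definition noise_moment :: "nat \<Rightarrow> nat \<Rightarrow> real \<Rightarrow> real \<Rightarrow> ((nat \<Rightarrow> nat) \<Rightarrow> real) \<Rightarrow> real" where
  "noise_moment p n \<alpha> \<epsilon> f = expect p n (\<lambda>x. noise_op p n \<epsilon> f x powr \<alpha>)"

text \<open>Influence I_j(f) = P(f(X) \<noteq> f(sigma_j X)), Z_j uniform on nonzero residues.\<close>
definition influence :: "nat \<Rightarrow> nat \<Rightarrow> nat \<Rightarrow> ((nat \<Rightarrow> nat) \<Rightarrow> real) \<Rightarrow> real" where
  "influence p n j f =
     (\<Sum>x\<in>cube p n. \<Sum>a\<in>{1..<p}.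
        (if f x \<noteq> f (x(j := (x j + a) mod p)) then 1 else 0)) / (real p ^ n * real (p - 1))"

definition total_influence :: "nat \<Rightarrow> nat \<Rightarrow> ((nat \<Rightarrow> nat) \<Rightarrow> real) \<Rightarrow> real" where
  "total_influence p n f = (\<Sum>j<n. influence p n j f)"

definition ep :: "nat \<Rightarrow> real \<Rightarrow> complex" where
  "ep p \<theta> = exp (2 * of_real pi * \<i> * of_real \<theta> / of_nat p)"

definition fourier :: "nat \<Rightarrow> nat \<Rightarrow> ((nat \<Rightarrow> nat) \<Rightarrow> real) \<Rightarrow> (nat \<Rightarrow> nat) \<Rightarrow> complex" where
  "fourier p n f \<xi> = (\<Sum>x\<in>cube p n. of_real (f x) * cnj (ep p (real (\<Sum>i<n. \<xi> i * x i))))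
                       / of_nat (p ^ n)"

definition supp_vec :: "nat \<Rightarrow> (nat \<Rightarrow> nat) \<Rightarrow> nat set" where
  "supp_vec n \<xi> = {j. j < n \<and> \<xi> j \<noteq> 0}"

definition W1 :: "nat \<Rightarrow> nat \<Rightarrow> ((nat \<Rightarrow> nat) \<Rightarrow> real) \<Rightarrow> real" where
  "W1 p n f = (\<Sum>\<xi>\<in>{\<xi>\<in>cube p n. card (supp_vec n \<xi>) = 1}. (cmod (fourier p n f \<xi>))\<^sup>2)"

end

theory Submission
  imports Defs
begin

text \<open>With \<open>\<rho> = 1 - \<epsilon> p / (p - 1)\<close>, the noise operator multiplies the character \<open>\<chi>\<^sub>\<xi>\<close> by
  \<open>\<rho>\<^bsup>|supp \<xi>|\<^esup>\<close>. For small \<open>\<epsilon>\<close> and Boolean \<open>f\<close>, \<open>T\<^sub>\<epsilon> f x\<close> moves from \<open>f x\<close> towards the other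
  value by \<open>\<epsilon> / (p - 1)\<close> times the number of Hamming neighbours where \<open>f\<close> differs, up to \<open>o(\<epsilon>)\<close>.
  As \<open>t\<^sup>\<alpha>\<close> has slope \<open>0\<close> at \<open>0\<close> and \<open>\<alpha>\<close> at \<open>1\<close>, only points with \<open>f x = 1\<close> count, and
  \<open>E (T\<^sub>\<epsilon> f)\<^sup>\<alpha> = m - \<alpha>/2 \<cdot> I(f) \<epsilon> + o(\<epsilon>)\<close>. Near \<open>\<epsilon> = 1 - 1/p\<close>, \<open>T\<^sub>\<epsilon> f = m + \<rho> f\<^sup>=\<^sup>1 + O(\<rho>\<^sup>2)\<close>;
  expanding \<open>t\<^sup>\<alpha>\<close> to second order at \<open>m\<close>, the linear term averages to zero and Parseval turns the
  quadratic one into \<open>E (T\<^sub>\<epsilon> f)\<^sup>\<alpha> = m\<^sup>\<alpha> + \<alpha>(\<alpha>-1)/2 \<cdot> m\<^bsup>\<alpha>-2\<^esup> W\<^sub>1(f) \<rho>\<^sup>2 + o(\<rho>\<^sup>2)\<close>.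
  Since \<open>\<B>\<^sub>m\<close> is finite, close enough to either end every maximizer optimizes the leading
  coefficient (for \<open>m = 0\<close> the class \<open>\<B>\<^sub>m\<close> is a single function).\<close>

lemma cube_0: "cube p 0 = {\<lambda>_. 0}"
  by (auto simp: cube_def)

lemma cube_Suc: "cube p (Suc n) = (\<lambda>(x, a). x(n := a)) ` (cube p n \<times> {..<p})"
proof
  show "(\<lambda>(x, a). x(n := a)) ` (cube p n \<times> {..<p}) \<subseteq> cube p (Suc n)"
    by (auto simp: cube_def)
  show "cube p (Suc n) \<subseteq> (\<lambda>(x, a). x(n := a)) ` (cube p n \<times> {..<p})"
  proof
    fix y assume y: "y \<in> cube p (Suc n)"
    then have "(y(n := 0), y n) \<in> cube p n \<times> {..<p}" by (auto simp: cube_def)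
    then show "y \<in> (\<lambda>(x, a). x(n := a)) ` (cube p n \<times> {..<p})"
      by (intro image_eqI[of _ _ "(y(n := 0), y n)"]) auto
  qed
qed

lemma inj_on_cube_Suc: "inj_on (\<lambda>(x, a). x(n := a)) (cube p n \<times> {..<p})"
proof (rule inj_onI, clarsimp)
  fix x a y b assume x: "x \<in> cube p n" and y: "y \<in> cube p n" and h: "x(n := a) = y(n := b)"
  have "x n = y n" using x y by (simp add: cube_def)
  with h show "x = y \<and> a = b" by (metis fun_upd_idem fun_upd_upd fun_upd_same)
qed

lemma finite_cube: "finite (cube p n)"
  by (induction n) (auto simp: cube_0 cube_Suc)

lemma sum_prod_cube:
  fixes g :: "nat \<Rightarrow> nat \<Rightarrow> 'a::comm_semiring_1"
  shows "(\<Sum>x\<in>cube p n. \<Prod>i<n. g i (x i)) = (\<Prod>i<n. \<Sum>a<p. g i a)"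
proof (induction n)
  case 0
  show ?case by (simp add: cube_0)
next
  case (Suc n)
  have "(\<Sum>x\<in>cube p (Suc n). \<Prod>i<Suc n. g i (x i))
      = (\<Sum>(x, a)\<in>cube p n \<times> {..<p}. \<Prod>i<Suc n. g i ((x(n := a)) i))"
    unfolding cube_Suc by (subst sum.reindex[OF inj_on_cube_Suc]) (simp add: o_def case_prod_beta)
  also have "\<dots> = (\<Sum>(x, a)\<in>cube p n \<times> {..<p}. (\<Prod>i<n. g i (x i)) * g n a)"
    by (intro sum.cong refl) auto
  also have "\<dots> = (\<Sum>x\<in>cube p n. \<Prod>i<n. g i (x i)) * (\<Sum>a<p. g n a)"
    by (simp add: sum.cartesian_product[symmetric] sum_product)
  finally show ?case
    using Suc by simp
qed

lemma card_cube: "card (cube p n) = p ^ n"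
  using sum_prod_cube[where g = "\<lambda>_ _. 1 :: nat" and p = p and n = n] by simp

lemma zero_in_cube: "p > 0 \<Longrightarrow> (\<lambda>_. 0) \<in> cube p n"
  by (auto simp: cube_def)

lemma vadd_in_cube: "p > 0 \<Longrightarrow> vadd p n x z \<in> cube p n"
  by (auto simp: vadd_def cube_def)

lemma vadd_zero: "x \<in> cube p n \<Longrightarrow> vadd p n x (\<lambda>_. 0) = x"
  by (auto simp: vadd_def cube_def)

lemma cube_eq_iff: "\<xi> \<in> cube p n \<Longrightarrow> \<eta> \<in> cube p n \<Longrightarrow> (\<forall>i<n. \<xi> i = \<eta> i) \<longleftrightarrow> \<xi> = \<eta>"
  by (auto simp: cube_def fun_eq_iff) (metis not_less)

subsection \<open>Characters and the Fourier transform\<close>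

definition unity_root :: "nat \<Rightarrow> complex" where
  "unity_root p = cis (2 * pi / real p)"

definition character :: "nat \<Rightarrow> nat \<Rightarrow> (nat \<Rightarrow> nat) \<Rightarrow> (nat \<Rightarrow> nat) \<Rightarrow> complex" where
  "character p n \<xi> x = ep p (real (\<Sum>i<n. \<xi> i * x i))"

lemma ep_of_nat: "ep p (real k) = unity_root p ^ k"
proof -
  have "unity_root p ^ k = cis (real k * (2 * pi / real p))"
    unfolding unity_root_def by (rule DeMoivre)
  also have "\<dots> = ep p (real k)"
    unfolding ep_def cis_conv_exp by (simp add: field_simps)
  finally show ?thesis by simp
qed

lemma unity_root_pow_self: "p > 0 \<Longrightarrow> unity_root p ^ p = 1"
  unfolding unity_root_def DeMoivre by simp

lemma unity_root_pow_mod: "p > 0 \<Longrightarrow> unity_root p ^ k = unity_root p ^ (k mod p)"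
  by (metis div_mult_mod_eq power_add power_mult power_one mult_1 unity_root_pow_self mult.commute)

lemma unity_root_pow_eq_1_iff:
  assumes "p > 0"
  shows "unity_root p ^ k = 1 \<longleftrightarrow> p dvd k"
proof
  assume "p dvd k"
  then show "unity_root p ^ k = 1"
    using unity_root_pow_self[OF assms] by (auto simp: power_mult)
next
  assume "unity_root p ^ k = 1"
  then have "cos (real k * (2 * pi / real p)) = 1"
    unfolding unity_root_def DeMoivre by (metis cis.sel(1) one_complex.sel(1))
  then obtain m :: int where "real k * (2 * pi / real p) = real_of_int m * 2 * pi"
    using cos_one_2pi_int by blast
  then have "real k = real_of_int m * real p"
    using assms by (simp add: field_simps)
  then have "int k = m * int p"
    by (metis of_int_eq_iff of_int_mult of_int_of_nat_eq)
  then show "p dvd k"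
    by (metis dvd_triv_right int_dvd_int_iff)
qed

lemma sum_unity_root_powers:
  assumes "p > 0"
  shows "(\<Sum>a<p. (unity_root p ^ k) ^ a) = (if p dvd k then of_nat p else 0)"
proof (cases "p dvd k")
  case True
  then have "unity_root p ^ k = 1" by (simp add: unity_root_pow_eq_1_iff[OF assms])
  with True show ?thesis by simp
next
  case False
  have "(unity_root p ^ k) ^ p = 1"
    using unity_root_pow_self[OF assms] by (metis power_mult mult.commute power_one)
  with False show ?thesis
    using geometric_sum[of "unity_root p ^ k" p] by (simp add: unity_root_pow_eq_1_iff[OF assms])
qed

lemma cnj_unity_root:
  assumes "p > 0"
  shows "cnj (unity_root p) = unity_root p ^ (p - 1)"
proof -
  have "unity_root p ^ (p - 1) * unity_root p = 1"
    using unity_root_pow_self[OF assms] assms by (metis Suc_diff_1 power_Suc2)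
  then have "unity_root p ^ (p - 1) = inverse (unity_root p)"
    using inverse_unique[of "unity_root p" "unity_root p ^ (p - 1)"] by (simp add: mult.commute)
  then show ?thesis
    unfolding unity_root_def by (simp add: cis_cnj)
qed

lemma dvd_add_pred_mult_iff:
  fixes a b p :: nat
  assumes "a < p" "b < p"
  shows "p dvd a + (p - 1) * b \<longleftrightarrow> a = b"
proof -
  obtain q where q: "p = Suc q" using assms by (cases p) auto
  have "int (a + (p - 1) * b) = (int a - int b) + int p * int b"
    unfolding q by (simp add: algebra_simps)
  then have "p dvd a + (p - 1) * b \<longleftrightarrow> int p dvd int a - int b"
    by (metis dvd_add_left_iff dvd_triv_left int_dvd_int_iff)
  also have "\<dots> \<longleftrightarrow> a = b"
    using assms dvd_imp_le_int[of "int a - int b" "int p"] by force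
  finally show ?thesis .
qed

lemma character_prod: "character p n \<xi> x = (\<Prod>i<n. unity_root p ^ (\<xi> i * x i))"
  unfolding character_def ep_of_nat by (rule power_sum)

lemma cnj_character:
  "p > 0 \<Longrightarrow> cnj (character p n \<xi> x) = (\<Prod>i<n. unity_root p ^ ((p - 1) * (\<xi> i * x i)))"
  unfolding character_prod by (simp add: cnj_unity_root power_mult)

lemma character_commute: "character p n \<xi> x = character p n x \<xi>"
  unfolding character_def by (simp add: mult.commute)

lemma character_zero: "character p n (\<lambda>_. 0) x = 1"
  by (simp add: character_def ep_def)

lemma character_vadd:
  assumes "p > 0"
  shows "character p n \<xi> (vadd p n x z) = character p n \<xi> x * character p n \<xi> z"
proof -
  have "unity_root p ^ (\<xi> i * ((x i + z i) mod p))
      = unity_root p ^ (\<xi> i * x i) * unity_root p ^ (\<xi> i * z i)" for i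
    by (metis unity_root_pow_mod[OF assms] mod_mult_right_eq distrib_left power_add)
  then show ?thesis
    unfolding character_prod vadd_def prod.distrib[symmetric] by (intro prod.cong refl) simp
qed

lemma prod_if_const:
  "(\<Prod>i<n. if P i then (c::'a::comm_semiring_1) else 0) = (if \<forall>i<n. P i then c ^ n else 0)"
  by (induction n) (auto simp: less_Suc_eq mult.commute)

lemma character_orthogonality:
  assumes p: "p > 0" and "\<xi> \<in> cube p n" "\<eta> \<in> cube p n"
  shows "(\<Sum>x\<in>cube p n. character p n \<xi> x * cnj (character p n \<eta> x))
       = (if \<xi> = \<eta> then of_nat p ^ n else 0)"
proof -
  have "(\<Sum>x\<in>cube p n. character p n \<xi> x * cnj (character p n \<eta> x))
      = (\<Sum>x\<in>cube p n. \<Prod>i<n. (unity_root p ^ (\<xi> i + (p - 1) * \<eta> i)) ^ (x i))"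
  proof (intro sum.cong refl)
    fix x
    have "a * c + d * (b * c) = (a + d * b) * c" for a b c d :: nat
      by (simp add: algebra_simps)
    then have fac: "unity_root p ^ (a * c) * unity_root p ^ (d * (b * c))
        = (unity_root p ^ (a + d * b)) ^ c" for a b c d
      by (simp only: power_add[symmetric] power_mult[symmetric])
    show "character p n \<xi> x * cnj (character p n \<eta> x)
        = (\<Prod>i<n. (unity_root p ^ (\<xi> i + (p - 1) * \<eta> i)) ^ (x i))"
      unfolding cnj_character[OF p] unfolding character_prod prod.distrib[symmetric]
      by (intro prod.cong refl) (rule fac)
  qed
  also have "\<dots> = (\<Prod>i<n. \<Sum>a<p. (unity_root p ^ (\<xi> i + (p - 1) * \<eta> i)) ^ a)"
    by (rule sum_prod_cube)
  also have "\<dots> = (\<Prod>i<n. if \<xi> i = \<eta> i then of_nat p else 0)"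
  proof (intro prod.cong refl)
    fix i assume "i \<in> {..<n}"
    then have "\<xi> i < p" "\<eta> i < p" using assms(2,3) by (auto simp: cube_def)
    then show "(\<Sum>a<p. (unity_root p ^ (\<xi> i + (p - 1) * \<eta> i)) ^ a)
        = (if \<xi> i = \<eta> i then of_nat p else 0)"
      by (simp only: sum_unity_root_powers[OF p] dvd_add_pred_mult_iff)
  qed
  also have "\<dots> = (if \<xi> = \<eta> then of_nat p ^ n else 0)"
    by (simp add: prod_if_const cube_eq_iff[OF assms(2,3)])
  finally show ?thesis .
qed

lemma sum_character:
  "p > 0 \<Longrightarrow> \<xi> \<in> cube p n \<Longrightarrow>
     (\<Sum>x\<in>cube p n. character p n \<xi> x) = (if \<xi> = (\<lambda>_. 0) then of_nat p ^ n else 0)"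
  using character_orthogonality[of p \<xi> n "\<lambda>_. 0"] zero_in_cube[of p n] by (simp add: character_zero)

lemma fourier_character:
  "fourier p n f \<xi> = (\<Sum>y\<in>cube p n. of_real (f y) * cnj (character p n \<xi> y)) / of_nat (p ^ n)"
  unfolding fourier_def character_def by simp

lemma fourier_zero: "fourier p n f (\<lambda>_. 0) = complex_of_real (expect p n f)"
  unfolding fourier_def expect_def by (simp add: ep_def)

lemma fourier_inversion:
  assumes p: "p > 0" and x: "x \<in> cube p n"
  shows "complex_of_real (f x) = (\<Sum>\<xi>\<in>cube p n. fourier p n f \<xi> * character p n \<xi> x)"
proof -
  have "(\<Sum>\<xi>\<in>cube p n. fourier p n f \<xi> * character p n \<xi> x)
      = (\<Sum>y\<in>cube p n. of_real (f y) *
           (\<Sum>\<xi>\<in>cube p n. character p n x \<xi> * cnj (character p n y \<xi>))) / of_nat (p ^ n)"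
    unfolding fourier_character sum_divide_distrib[symmetric] sum_distrib_left
      sum_distrib_right times_divide_eq_left
    by (subst sum.swap) (simp add: character_commute mult_ac)
  also have "\<dots> = (\<Sum>y\<in>cube p n. if x = y then of_real (f x) * of_nat p ^ n else 0) / of_nat (p ^ n)"
    by (intro arg_cong2[where f = "(/)"] sum.cong refl) (simp add: character_orthogonality[OF p x])
  also have "\<dots> = of_real (f x)"
    using x p finite_cube[of p n] by simp
  finally show ?thesis by simp
qed

lemma sum_norm_square_character_sum:
  assumes p: "p > 0" and S: "S \<subseteq> cube p n"
  shows "(\<Sum>x\<in>cube p n. (cmod (\<Sum>\<xi>\<in>S. c \<xi> * character p n \<xi> x))\<^sup>2)
       = real p ^ n * (\<Sum>\<xi>\<in>S. (cmod (c \<xi>))\<^sup>2)"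
proof -
  have fS: "finite S" using finite_subset[OF S finite_cube] .
  have "complex_of_real (\<Sum>x\<in>cube p n. (cmod (\<Sum>\<xi>\<in>S. c \<xi> * character p n \<xi> x))\<^sup>2)
      = (\<Sum>\<eta>\<in>S. \<Sum>\<xi>\<in>S. c \<xi> * cnj (c \<eta>) *
           (\<Sum>x\<in>cube p n. character p n \<xi> x * cnj (character p n \<eta> x)))"
    unfolding of_real_sum complex_norm_square cnj_sum sum_distrib_right sum_distrib_left
    by (subst sum.swap, subst (2) sum.swap) (simp add: mult_ac)
  also have "\<dots> = (\<Sum>\<eta>\<in>S. \<Sum>\<xi>\<in>S. if \<xi> = \<eta> then c \<xi> * cnj (c \<xi>) * of_nat p ^ n else 0)"
    using S by (intro sum.cong refl) (simp add: character_orthogonality[OF p] subsetD)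
  also have "\<dots> = (\<Sum>\<xi>\<in>S. c \<xi> * cnj (c \<xi>) * of_nat p ^ n)"
    using fS by simp
  also have "\<dots> = complex_of_real (real p ^ n * (\<Sum>\<xi>\<in>S. (cmod (c \<xi>))\<^sup>2))"
    by (simp add: complex_norm_square[symmetric] sum_distrib_left mult_ac)
  finally show ?thesis using of_real_eq_iff by blast
qed

subsection \<open>Spectrum of the noise operator\<close>

definition coord_weight :: "nat \<Rightarrow> real \<Rightarrow> nat \<Rightarrow> real" where
  "coord_weight p \<epsilon> a = (if a = 0 then 1 - \<epsilon> else \<epsilon> / real (p - 1))"

text \<open>The paper's \<open>\<rho>\<close>: the eigenvalue of \<open>T\<^sub>\<epsilon>\<close> on each nontrivial character of one
  coordinate.\<close>

definition noise_corr :: "nat \<Rightarrow> real \<Rightarrow> real" where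
  "noise_corr p \<epsilon> = 1 - \<epsilon> * real p / real (p - 1)"

lemma noise_weight_prod: "noise_weight p n \<epsilon> z = (\<Prod>i<n. coord_weight p \<epsilon> (z i))"
  by (simp add: noise_weight_def coord_weight_def)

lemma noise_weight_nonneg: "0 \<le> \<epsilon> \<Longrightarrow> \<epsilon> \<le> 1 \<Longrightarrow> 0 \<le> noise_weight p n \<epsilon> z"
  unfolding noise_weight_prod by (intro prod_nonneg) (simp add: coord_weight_def)

lemma noise_weight_zero: "noise_weight p n \<epsilon> (\<lambda>_. 0) = (1 - \<epsilon>) ^ n"
  by (simp add: noise_weight_def)

lemma coord_weight_eq:
  "p \<ge> 2 \<Longrightarrow> coord_weight p \<epsilon> a = \<epsilon> / real (p - 1) + (if a = 0 then noise_corr p \<epsilon> else 0)"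
  by (simp add: coord_weight_def noise_corr_def field_simps)

lemma sum_coord_weight:
  assumes "p \<ge> 2"
  shows "(\<Sum>a<p. coord_weight p \<epsilon> a) = 1"
proof -
  obtain q where q: "p = Suc q" "q \<ge> 1" using assms by (cases p) auto
  have "(\<Sum>a<p. coord_weight p \<epsilon> a) = coord_weight p \<epsilon> 0 + (\<Sum>a<q. coord_weight p \<epsilon> (Suc a))"
    unfolding q(1) by (rule sum.lessThan_Suc_shift)
  also have "\<dots> = 1"
    using q by (simp add: coord_weight_def)
  finally show ?thesis .
qed

lemma sum_coord_weight_character:
  assumes p: "p \<ge> 2" and b: "b < p"
  shows "(\<Sum>a<p. complex_of_real (coord_weight p \<epsilon> a) * (unity_root p ^ b) ^ a)
       = (if b = 0 then 1 else of_real (noise_corr p \<epsilon>))"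
proof (cases "b = 0")
  case True
  then show ?thesis by (simp add: sum_coord_weight[OF p] flip: of_real_sum)
next
  case False
  have p0: "p > 0" using p by simp
  have "\<not> p dvd b" using False b by (auto dest: dvd_imp_le)
  have "(\<Sum>a<p. complex_of_real (coord_weight p \<epsilon> a) * (unity_root p ^ b) ^ a)
      = (\<Sum>a<p. of_real (\<epsilon> / real (p - 1)) * (unity_root p ^ b) ^ a
                 + (if a = 0 then of_real (noise_corr p \<epsilon>) else 0))"
    by (intro sum.cong refl) (simp add: coord_weight_eq[OF p] distrib_right)
  also have "\<dots> = of_real (\<epsilon> / real (p - 1)) * (\<Sum>a<p. (unity_root p ^ b) ^ a) + of_real (noise_corr p \<epsilon>)"
    using p0 by (simp add: sum.distrib sum_distrib_left)
  finally show ?thesis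
    using False \<open>\<not> p dvd b\<close> by (simp add: sum_unity_root_powers[OF p0])
qed

lemma sum_noise_weight: "p \<ge> 2 \<Longrightarrow> (\<Sum>z\<in>cube p n. noise_weight p n \<epsilon> z) = 1"
  using sum_prod_cube[where g = "\<lambda>_ a. coord_weight p \<epsilon> a" and p = p and n = n]
  by (simp add: noise_weight_prod sum_coord_weight)

lemma prod_if_zero_card_supp:
  "(\<Prod>i<n. if \<xi> i = 0 then 1 else (c::'a::comm_monoid_mult)) = c ^ card (supp_vec n \<xi>)"
proof -
  have supp: "supp_vec n \<xi> = {i\<in>{..<n}. \<xi> i \<noteq> 0}" by (auto simp: supp_vec_def)
  have "c ^ card (supp_vec n \<xi>) = (\<Prod>i\<in>supp_vec n \<xi>. c)" by simp
  also have "\<dots> = (\<Prod>i<n. if \<xi> i \<noteq> 0 then c else 1)"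
    unfolding supp by (rule prod.inter_filter) simp
  also have "\<dots> = (\<Prod>i<n. if \<xi> i = 0 then 1 else c)"
    by (intro prod.cong refl) simp
  finally show ?thesis by simp
qed

lemma sum_noise_weight_character:
  assumes p: "p \<ge> 2" and \<xi>: "\<xi> \<in> cube p n"
  shows "(\<Sum>z\<in>cube p n. complex_of_real (noise_weight p n \<epsilon> z) * character p n \<xi> z)
       = of_real (noise_corr p \<epsilon> ^ card (supp_vec n \<xi>))"
proof -
  have "(\<Sum>z\<in>cube p n. complex_of_real (noise_weight p n \<epsilon> z) * character p n \<xi> z)
      = (\<Sum>z\<in>cube p n. \<Prod>i<n. complex_of_real (coord_weight p \<epsilon> (z i)) * (unity_root p ^ \<xi> i) ^ (z i))"
    unfolding noise_weight_prod character_prod of_real_prod prod.distrib[symmetric]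
    by (intro sum.cong prod.cong refl) (simp add: power_mult)
  also have "\<dots> = (\<Prod>i<n. \<Sum>a<p. complex_of_real (coord_weight p \<epsilon> a) * (unity_root p ^ \<xi> i) ^ a)"
    by (rule sum_prod_cube)
  also have "\<dots> = (\<Prod>i<n. if \<xi> i = 0 then 1 else of_real (noise_corr p \<epsilon>))"
    using \<xi> by (intro prod.cong refl) (simp add: sum_coord_weight_character[OF p] cube_def)
  also have "\<dots> = of_real (noise_corr p \<epsilon>) ^ card (supp_vec n \<xi>)"
    by (rule prod_if_zero_card_supp)
  finally show ?thesis by simp
qed

lemma noise_op_fourier:
  assumes p: "p \<ge> 2"
  shows "complex_of_real (noise_op p n \<epsilon> f x)
       = (\<Sum>\<xi>\<in>cube p n. of_real (noise_corr p \<epsilon> ^ card (supp_vec n \<xi>)) * fourier p n f \<xi> * character p n \<xi> x)"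
proof -
  have p0: "p > 0" using p by simp
  have "complex_of_real (noise_op p n \<epsilon> f x)
      = (\<Sum>z\<in>cube p n. \<Sum>\<xi>\<in>cube p n.
           fourier p n f \<xi> * character p n \<xi> x * (of_real (noise_weight p n \<epsilon> z) * character p n \<xi> z))"
    unfolding noise_op_def of_real_sum of_real_mult
    by (intro sum.cong refl)
      (simp add: fourier_inversion[OF p0 vadd_in_cube[OF p0]] character_vadd[OF p0] sum_distrib_left mult_ac)
  also have "\<dots> = (\<Sum>\<xi>\<in>cube p n. fourier p n f \<xi> * character p n \<xi> x *
      (\<Sum>z\<in>cube p n. of_real (noise_weight p n \<epsilon> z) * character p n \<xi> z))"
    by (subst sum.swap) (simp add: sum_distrib_left)
  also have "\<dots> = (\<Sum>\<xi>\<in>cube p n. of_real (noise_corr p \<epsilon> ^ card (supp_vec n \<xi>)) * fourier p n f \<xi> * character p n \<xi> x)"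
  proof (intro sum.cong refl)
    fix \<xi> assume \<xi>: "\<xi> \<in> cube p n"
    show "fourier p n f \<xi> * character p n \<xi> x *
        (\<Sum>z\<in>cube p n. of_real (noise_weight p n \<epsilon> z) * character p n \<xi> z)
      = of_real (noise_corr p \<epsilon> ^ card (supp_vec n \<xi>)) * fourier p n f \<xi> * character p n \<xi> x"
      unfolding sum_noise_weight_character[OF p \<xi>] by (simp add: mult_ac)
  qed
  finally show ?thesis .
qed

lemma card_supp_vec_zero: "card (supp_vec n (\<lambda>_. 0)) = 0"
  by (simp add: supp_vec_def)

lemma card_supp_vec_pos:
  assumes "z \<in> cube p n" "z \<noteq> (\<lambda>_. 0)"
  shows "card (supp_vec n z) > 0"
proof -
  obtain i where "z i \<noteq> 0" using assms(2) by auto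
  moreover from this have "i < n" using assms(1) by (auto simp: cube_def not_less[symmetric])
  ultimately have "i \<in> supp_vec n z" by (simp add: supp_vec_def)
  then show ?thesis by (auto simp: card_gt_0_iff supp_vec_def)
qed

lemma noise_op_fourier_nonconstant:
  assumes p: "p \<ge> 2"
  shows "complex_of_real (noise_op p n \<epsilon> f x - expect p n f)
       = (\<Sum>\<xi>\<in>cube p n - {\<lambda>_. 0}.
            of_real (noise_corr p \<epsilon> ^ card (supp_vec n \<xi>)) * fourier p n f \<xi> * character p n \<xi> x)"
  using p unfolding of_real_diff noise_op_fourier[OF p]
  by (simp add: sum.remove[OF finite_cube zero_in_cube] character_zero card_supp_vec_zero fourier_zero)

lemma sum_noise_op:
  assumes p: "p \<ge> 2"
  shows "(\<Sum>x\<in>cube p n. noise_op p n \<epsilon> f x) = (\<Sum>x\<in>cube p n. f x)"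
proof -
  have p0: "p > 0" using p by simp
  have "complex_of_real (\<Sum>x\<in>cube p n. noise_op p n \<epsilon> f x)
      = (\<Sum>\<xi>\<in>cube p n. of_real (noise_corr p \<epsilon> ^ card (supp_vec n \<xi>)) * fourier p n f \<xi> *
           (\<Sum>x\<in>cube p n. character p n \<xi> x))"
    unfolding of_real_sum noise_op_fourier[OF p] by (subst sum.swap) (simp add: sum_distrib_left)
  also have "\<dots> = (\<Sum>\<xi>\<in>cube p n. if \<xi> = (\<lambda>_. 0) then fourier p n f \<xi> * of_nat p ^ n else 0)"
    by (intro sum.cong refl) (auto simp: sum_character[OF p0] card_supp_vec_zero)
  also have "\<dots> = complex_of_real (\<Sum>x\<in>cube p n. f x)"
    using p0 by (simp add: zero_in_cube finite_cube fourier_zero expect_def)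
  finally show ?thesis using of_real_eq_iff by blast
qed

subsection \<open>Small noise: the first-order term is the total influence\<close>

definition weight_one :: "nat \<Rightarrow> nat \<Rightarrow> (nat \<Rightarrow> nat) set" where
  "weight_one p n = {z \<in> cube p n. card (supp_vec n z) = 1}"

definition edge_boundary :: "nat \<Rightarrow> nat \<Rightarrow> ((nat \<Rightarrow> nat) \<Rightarrow> real) \<Rightarrow> real" where
  "edge_boundary p n f = (\<Sum>x\<in>cube p n. f x * (\<Sum>z\<in>weight_one p n. 1 - f (vadd p n x z)))"

lemma one_minus_powr_bounds:
  fixes u \<alpha> :: real
  assumes u: "0 \<le> u" "u < 1" and \<alpha>: "\<alpha> > 1"
  shows "\<alpha> * u * (1 - u) powr (\<alpha> - 1) \<le> 1 - (1 - u) powr \<alpha>"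
    and "1 - (1 - u) powr \<alpha> \<le> \<alpha> * u"
proof -
  have "\<exists>t. 1 - u \<le> t \<and> t \<le> 1 \<and> 1 - (1 - u) powr \<alpha> = \<alpha> * u * t powr (\<alpha> - 1)"
  proof (cases "u = 0")
    case False
    have "DERIV (\<lambda>t. t powr \<alpha>) t :> \<alpha> * t powr (\<alpha> - 1)" if "1 - u \<le> t" for t
      using that u by (intro has_real_derivative_powr) simp
    then obtain t where "1 - u < t" "t < 1" "1 powr \<alpha> - (1 - u) powr \<alpha> = u * (\<alpha> * t powr (\<alpha> - 1))"
      using MVT2[of "1 - u" 1 "\<lambda>t. t powr \<alpha>" "\<lambda>t. \<alpha> * t powr (\<alpha> - 1)"] False u by auto
    then show ?thesis by (intro exI[of _ t]) (auto simp: mult_ac)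
  qed (auto intro: exI[of _ 1])
  then obtain t where t: "1 - u \<le> t" "t \<le> 1" and eq: "1 - (1 - u) powr \<alpha> = \<alpha> * u * t powr (\<alpha> - 1)"
    by blast
  have "(1 - u) powr (\<alpha> - 1) \<le> t powr (\<alpha> - 1)" "t powr (\<alpha> - 1) \<le> 1"
    using t u \<alpha> by (auto intro: powr_mono2 powr_le1)
  moreover have "0 \<le> \<alpha> * u" using u \<alpha> by simp
  ultimately show "\<alpha> * u * (1 - u) powr (\<alpha> - 1) \<le> 1 - (1 - u) powr \<alpha>" "1 - (1 - u) powr \<alpha> \<le> \<alpha> * u"
    unfolding eq by (auto intro: mult_left_mono mult_right_le_one_le)
qed

lemma one_minus_powr_div_tendsto:
  fixes u :: "real \<Rightarrow> real"
  assumes \<alpha>: "\<alpha> > 1" and lim: "((\<lambda>\<epsilon>. u \<epsilon> / \<epsilon>) \<longlongrightarrow> d) (at_right 0)"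
    and nonneg: "eventually (\<lambda>\<epsilon>. 0 \<le> u \<epsilon>) (at_right 0)"
  shows "((\<lambda>\<epsilon>. (1 - (1 - u \<epsilon>) powr \<alpha>) / \<epsilon>) \<longlongrightarrow> \<alpha> * d) (at_right 0)"
proof -
  have pos: "eventually (\<lambda>\<epsilon>::real. 0 < \<epsilon>) (at_right 0)"
    by (simp add: eventually_at_right_less)
  have "((\<lambda>\<epsilon>. \<epsilon> * (u \<epsilon> / \<epsilon>)) \<longlongrightarrow> 0) (at_right 0)"
    using tendsto_mult[OF tendsto_ident_at lim] by simp
  moreover have "eventually (\<lambda>\<epsilon>. \<epsilon> * (u \<epsilon> / \<epsilon>) = u \<epsilon>) (at_right 0)"
    using pos by (rule eventually_mono) simp
  ultimately have u0: "(u \<longlongrightarrow> 0) (at_right 0)"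
    by (rule Lim_transform_eventually)
  define lo where "lo \<epsilon> = \<alpha> * (u \<epsilon> / \<epsilon>) * (1 - u \<epsilon>) powr (\<alpha> - 1)" for \<epsilon>
  have bounds: "eventually (\<lambda>\<epsilon>. lo \<epsilon> \<le> (1 - (1 - u \<epsilon>) powr \<alpha>) / \<epsilon>
      \<and> (1 - (1 - u \<epsilon>) powr \<alpha>) / \<epsilon> \<le> \<alpha> * (u \<epsilon> / \<epsilon>)) (at_right 0)"
    using order_tendstoD(2)[OF u0 zero_less_one] nonneg pos
  proof eventually_elim
    case (elim \<epsilon>)
    from one_minus_powr_bounds[of "u \<epsilon>" \<alpha>] elim \<alpha>
    have "\<alpha> * u \<epsilon> * (1 - u \<epsilon>) powr (\<alpha> - 1) \<le> 1 - (1 - u \<epsilon>) powr \<alpha>"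
      "1 - (1 - u \<epsilon>) powr \<alpha> \<le> \<alpha> * u \<epsilon>" by auto
    then have "\<alpha> * u \<epsilon> * (1 - u \<epsilon>) powr (\<alpha> - 1) / \<epsilon> \<le> (1 - (1 - u \<epsilon>) powr \<alpha>) / \<epsilon>"
      "(1 - (1 - u \<epsilon>) powr \<alpha>) / \<epsilon> \<le> \<alpha> * u \<epsilon> / \<epsilon>"
      using elim by (auto intro: divide_right_mono)
    then show ?case by (simp add: lo_def)
  qed
  have "(lo \<longlongrightarrow> \<alpha> * d * (1 - 0) powr (\<alpha> - 1)) (at_right 0)"
    unfolding lo_def by (intro tendsto_intros lim u0) simp
  then have lo_lim: "(lo \<longlongrightarrow> \<alpha> * d) (at_right 0)" by simp
  have hi_lim: "((\<lambda>\<epsilon>. \<alpha> * (u \<epsilon> / \<epsilon>)) \<longlongrightarrow> \<alpha> * d) (at_right 0)"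
    by (intro tendsto_intros lim)
  show ?thesis
    by (rule tendsto_sandwich[OF eventually_mono[OF bounds] eventually_mono[OF bounds] lo_lim hi_lim])
      auto
qed

lemma powr_div_tendsto_zero:
  fixes y :: "real \<Rightarrow> real"
  assumes \<alpha>: "\<alpha> > 1" and bound: "eventually (\<lambda>\<epsilon>. 0 \<le> y \<epsilon> \<and> y \<epsilon> \<le> C * \<epsilon>) (at_right 0)"
  shows "((\<lambda>\<epsilon>. y \<epsilon> powr \<alpha> / \<epsilon>) \<longlongrightarrow> 0) (at_right 0)"
proof -
  have bounds: "eventually (\<lambda>\<epsilon>. 0 \<le> y \<epsilon> powr \<alpha> / \<epsilon> \<and> y \<epsilon> powr \<alpha> / \<epsilon> \<le> C powr \<alpha> * \<epsilon> powr (\<alpha> - 1))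
      (at_right 0)"
    using bound eventually_at_right_less[of 0]
  proof eventually_elim
    case (elim \<epsilon>)
    then have "0 \<le> C * \<epsilon>" by linarith
    with elim have "C \<ge> 0" by (simp add: zero_le_mult_iff)
    have "y \<epsilon> powr \<alpha> \<le> (C * \<epsilon>) powr \<alpha>"
      using elim \<alpha> by (intro powr_mono2) auto
    also have "\<dots> = C powr \<alpha> * \<epsilon> powr (\<alpha> - 1) * \<epsilon>"
      using elim \<open>C \<ge> 0\<close> by (simp add: powr_mult powr_diff)
    finally show ?case
      using elim by (simp add: divide_le_eq)
  qed
  have "eventually (\<lambda>\<epsilon>::real. 0 \<le> \<epsilon>) (at_right 0)"
    using eventually_at_right_less[of 0] by (rule eventually_mono) simp
  then have "((\<lambda>\<epsilon>. \<epsilon> powr (\<alpha> - 1)) \<longlongrightarrow> 0 powr (\<alpha> - 1)) (at_right 0)"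
    using \<alpha> by (intro tendsto_powr' tendsto_ident_at tendsto_const) auto
  then have hi_lim: "((\<lambda>\<epsilon>. C powr \<alpha> * \<epsilon> powr (\<alpha> - 1)) \<longlongrightarrow> 0) (at_right 0)"
    using tendsto_mult[OF tendsto_const, of _ 0 _ "C powr \<alpha>"] by simp
  show ?thesis
    by (rule tendsto_sandwich[OF eventually_mono[OF bounds] eventually_mono[OF bounds] tendsto_const hi_lim])
      auto
qed

lemma noise_op_split:
  assumes p: "p \<ge> 2" and x: "x \<in> cube p n"
  shows "noise_op p n \<epsilon> f x
       = (1 - \<epsilon>) ^ n * f x + (\<Sum>z\<in>cube p n - {\<lambda>_. 0}. noise_weight p n \<epsilon> z * f (vadd p n x z))"
  using p unfolding noise_op_def
  by (simp add: sum.remove[OF finite_cube zero_in_cube] noise_weight_zero vadd_zero[OF x])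

lemma sum_noise_weight_nonzero:
  "p \<ge> 2 \<Longrightarrow> (\<Sum>z\<in>cube p n - {\<lambda>_. 0}. noise_weight p n \<epsilon> z) = 1 - (1 - \<epsilon>) ^ n"
  using sum_noise_weight[of p n \<epsilon>]
  by (simp add: sum.remove[OF finite_cube zero_in_cube] noise_weight_zero)

lemma noise_op_bounds:
  assumes p: "p \<ge> 2" and \<epsilon>: "0 \<le> \<epsilon>" "\<epsilon> \<le> 1"
    and bool: "\<And>y. y \<in> cube p n \<Longrightarrow> f y \<in> {0, 1}"
  shows "0 \<le> noise_op p n \<epsilon> f x" and "noise_op p n \<epsilon> f x \<le> 1"
proof -
  have f: "0 \<le> f (vadd p n x z) \<and> f (vadd p n x z) \<le> 1" for z
  proof -
    have "vadd p n x z \<in> cube p n" using p by (simp add: vadd_in_cube)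
    then show ?thesis using bool by fastforce
  qed
  show "0 \<le> noise_op p n \<epsilon> f x"
    unfolding noise_op_def using f \<epsilon> by (intro sum_nonneg mult_nonneg_nonneg noise_weight_nonneg) auto
  have "noise_op p n \<epsilon> f x \<le> (\<Sum>z\<in>cube p n. noise_weight p n \<epsilon> z)"
    unfolding noise_op_def using f \<epsilon> by (intro sum_mono mult_right_le_one_le noise_weight_nonneg) auto
  then show "noise_op p n \<epsilon> f x \<le> 1" by (simp add: sum_noise_weight[OF p])
qed

lemma noise_op_le_at_zero:
  assumes p: "p \<ge> 2" and x: "x \<in> cube p n" and \<epsilon>: "0 \<le> \<epsilon>" "\<epsilon> \<le> 1"
    and bool: "\<And>y. y \<in> cube p n \<Longrightarrow> f y \<in> {0, 1}" and fx: "f x = 0"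
  shows "noise_op p n \<epsilon> f x \<le> real n * \<epsilon>"
proof -
  have "0 \<le> f (vadd p n x z) \<and> f (vadd p n x z) \<le> 1" for z
  proof -
    have "vadd p n x z \<in> cube p n" using p by (simp add: vadd_in_cube)
    then show ?thesis using bool by fastforce
  qed
  then have "noise_op p n \<epsilon> f x \<le> (\<Sum>z\<in>cube p n - {\<lambda>_. 0}. noise_weight p n \<epsilon> z)"
    unfolding noise_op_split[OF p x] fx using \<epsilon>
    by (simp, intro sum_mono mult_right_le_one_le noise_weight_nonneg) auto
  also have "\<dots> \<le> real n * \<epsilon>"
    using Bernoulli_inequality[of "- \<epsilon>" n] \<epsilon> by (simp add: sum_noise_weight_nonzero[OF p])
  finally show ?thesis .
qed

lemma one_minus_noise_op:
  "p \<ge> 2 \<Longrightarrow> 1 - noise_op p n \<epsilon> f x = (\<Sum>z\<in>cube p n. noise_weight p n \<epsilon> z * (1 - f (vadd p n x z)))"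
  unfolding noise_op_def using sum_noise_weight[of p n \<epsilon>]
  by (simp add: right_diff_distrib sum_subtractf)

lemma noise_weight_eq:
  "noise_weight p n \<epsilon> z
     = (1 - \<epsilon>) ^ (n - card (supp_vec n z)) * (\<epsilon> / real (p - 1)) ^ card (supp_vec n z)"
proof -
  let ?Z = "{..<n} \<inter> {i. z i = 0}" and ?S = "{..<n} \<inter> - {i. z i = 0}"
  have S: "?S = supp_vec n z" by (auto simp: supp_vec_def)
  have "?Z \<union> ?S = {..<n}" by auto
  then have "card ?Z + card ?S = n"
    using card_Un_disjoint[of ?Z ?S] by auto
  then have "card ?Z = n - card (supp_vec n z)" using S by simp
  then show ?thesis
    unfolding noise_weight_def by (subst prod.If_cases) (simp_all add: S[symmetric])
qed

lemma noise_weight_div_tendsto: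
  assumes p: "p \<ge> 2" and z: "z \<in> cube p n" "z \<noteq> (\<lambda>_. 0)"
  shows "((\<lambda>\<epsilon>. noise_weight p n \<epsilon> z / \<epsilon>)
           \<longlongrightarrow> (if card (supp_vec n z) = 1 then 1 / real (p - 1) else 0)) (at_right 0)"
proof -
  define k where "k = card (supp_vec n z)"
  obtain j where j: "k = Suc j"
    using card_supp_vec_pos[OF z] unfolding k_def by (cases "card (supp_vec n z)") auto
  have "((\<lambda>\<epsilon>::real. (1 - \<epsilon>) ^ (n - k) * \<epsilon> ^ j / real (p - 1) ^ k)
      \<longlongrightarrow> (1 - 0) ^ (n - k) * 0 ^ j / real (p - 1) ^ k) (at_right 0)"
    using p by (intro tendsto_intros) simp
  moreover have "(1 - 0) ^ (n - k) * 0 ^ j / real (p - 1) ^ k = (if k = 1 then 1 / real (p - 1) else (0::real))"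
    using j by (cases j) auto
  moreover have "eventually (\<lambda>\<epsilon>. (1 - \<epsilon>) ^ (n - k) * \<epsilon> ^ j / real (p - 1) ^ k
      = noise_weight p n \<epsilon> z / \<epsilon>) (at_right 0)"
    using eventually_at_right_less[of 0]
  proof (rule eventually_mono)
    fix \<epsilon> :: real assume "0 < \<epsilon>"
    moreover have "(\<epsilon> / real (p - 1)) ^ k = \<epsilon> * \<epsilon> ^ j / real (p - 1) ^ k"
      unfolding j by (simp add: power_divide)
    ultimately show "(1 - \<epsilon>) ^ (n - k) * \<epsilon> ^ j / real (p - 1) ^ k = noise_weight p n \<epsilon> z / \<epsilon>"
      unfolding noise_weight_eq k_def[symmetric] by simp
  qed
  ultimately show ?thesis
    unfolding k_def[symmetric] by (simp add: Lim_transform_eventually)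
qed

lemma one_minus_noise_op_div_tendsto:
  assumes p: "p \<ge> 2" and x: "x \<in> cube p n" and fx: "f x = 1"
  shows "((\<lambda>\<epsilon>. (1 - noise_op p n \<epsilon> f x) / \<epsilon>)
           \<longlongrightarrow> (\<Sum>z\<in>weight_one p n. 1 - f (vadd p n x z)) / real (p - 1)) (at_right 0)"
proof -
  have "((\<lambda>\<epsilon>. \<Sum>z\<in>cube p n. noise_weight p n \<epsilon> z / \<epsilon> * (1 - f (vadd p n x z)))
      \<longlongrightarrow> (\<Sum>z\<in>cube p n. (if card (supp_vec n z) = 1 then 1 / real (p - 1) else 0) *
                            (1 - f (vadd p n x z)))) (at_right 0)"
  proof (intro tendsto_sum)
    fix z assume z: "z \<in> cube p n"
    show "((\<lambda>\<epsilon>. noise_weight p n \<epsilon> z / \<epsilon> * (1 - f (vadd p n x z))) \<longlongrightarrow>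
        (if card (supp_vec n z) = 1 then 1 / real (p - 1) else 0) * (1 - f (vadd p n x z))) (at_right 0)"
    proof (cases "z = (\<lambda>_. 0)")
      case True
      then show ?thesis using fx by (simp add: vadd_zero[OF x])
    next
      case False
      then show ?thesis by (intro tendsto_intros noise_weight_div_tendsto p z)
    qed
  qed
  moreover have "(\<Sum>z\<in>cube p n. (if card (supp_vec n z) = 1 then 1 / real (p - 1) else 0) *
                                   (1 - f (vadd p n x z)))
      = (\<Sum>z\<in>weight_one p n. 1 - f (vadd p n x z)) / real (p - 1)"
  proof -
    have "(\<Sum>z\<in>cube p n. (if card (supp_vec n z) = 1 then 1 / real (p - 1) else 0) *
                         (1 - f (vadd p n x z)))
        = (\<Sum>z\<in>cube p n. if card (supp_vec n z) = 1 then (1 - f (vadd p n x z)) / real (p - 1) else 0)"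
      by (intro sum.cong refl) simp
    also have "\<dots> = (\<Sum>z\<in>weight_one p n. (1 - f (vadd p n x z)) / real (p - 1))"
      unfolding weight_one_def by (rule sum.inter_filter[OF finite_cube, symmetric])
    finally show ?thesis by (simp add: sum_divide_distrib)
  qed
  ultimately show ?thesis
    unfolding one_minus_noise_op[OF p] sum_divide_distrib by (simp add: mult.commute)
qed

lemma noise_op_powr_div_tendsto:
  assumes p: "p \<ge> 2" and x: "x \<in> cube p n" and \<alpha>: "\<alpha> > 1"
    and bool: "\<And>y. y \<in> cube p n \<Longrightarrow> f y \<in> {0, 1}"
  shows "((\<lambda>\<epsilon>. (f x - noise_op p n \<epsilon> f x powr \<alpha>) / \<epsilon>)
           \<longlongrightarrow> \<alpha> * f x * (\<Sum>z\<in>weight_one p n. 1 - f (vadd p n x z)) / real (p - 1)) (at_right 0)"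
proof -
  have small: "eventually (\<lambda>\<epsilon>::real. 0 \<le> \<epsilon> \<and> \<epsilon> \<le> 1) (at_right 0)"
    using eventually_at_right_real[of 0 1] by (rule eventually_mono) auto
  consider "f x = 1" | "f x = 0" using bool[OF x] by blast
  then show ?thesis
  proof cases
    case 1
    have "eventually (\<lambda>\<epsilon>. 0 \<le> 1 - noise_op p n \<epsilon> f x) (at_right 0)"
      using small by (rule eventually_mono) (use noise_op_bounds(2)[OF p _ _ bool] in auto)
    from one_minus_powr_div_tendsto[OF \<alpha> one_minus_noise_op_div_tendsto[where f = f, OF p x 1] this] 1
    show ?thesis by simp
  next
    case 2
    have "eventually (\<lambda>\<epsilon>. 0 \<le> noise_op p n \<epsilon> f x \<and> noise_op p n \<epsilon> f x \<le> real n * \<epsilon>) (at_right 0)"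
      using small by (rule eventually_mono)
        (use noise_op_bounds(1)[OF p _ _ bool] noise_op_le_at_zero[where f = f, OF p x _ _ bool 2] in auto)
    from tendsto_minus[OF powr_div_tendsto_zero[OF \<alpha> this]] 2
    show ?thesis by simp
  qed
qed

lemma noise_moment_small_noise_tendsto:
  assumes p: "p \<ge> 2" and \<alpha>: "\<alpha> > 1" and bool: "\<And>y. y \<in> cube p n \<Longrightarrow> f y \<in> {0, 1}"
  shows "((\<lambda>\<epsilon>. (expect p n f - noise_moment p n \<alpha> \<epsilon> f) / \<epsilon>)
           \<longlongrightarrow> \<alpha> * edge_boundary p n f / (real p ^ n * real (p - 1))) (at_right 0)"
proof -
  have eq: "(expect p n f - noise_moment p n \<alpha> \<epsilon> f) / \<epsilon>
      = (\<Sum>x\<in>cube p n. (f x - noise_op p n \<epsilon> f x powr \<alpha>) / \<epsilon>) / real p ^ n" for \<epsilon>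
    unfolding expect_def noise_moment_def
    by (simp add: sum_divide_distrib[symmetric] sum_subtractf diff_divide_distrib mult.commute)
  have "((\<lambda>\<epsilon>. (\<Sum>x\<in>cube p n. (f x - noise_op p n \<epsilon> f x powr \<alpha>) / \<epsilon>) / real p ^ n)
      \<longlongrightarrow> (\<Sum>x\<in>cube p n. \<alpha> * f x * (\<Sum>z\<in>weight_one p n. 1 - f (vadd p n x z)) / real (p - 1))
            / real p ^ n) (at_right 0)"
    using p by (intro tendsto_intros noise_op_powr_div_tendsto[OF p _ \<alpha> bool]) auto
  also have "(\<Sum>x\<in>cube p n. \<alpha> * f x * (\<Sum>z\<in>weight_one p n. 1 - f (vadd p n x z)) / real (p - 1))
      / real p ^ n = \<alpha> * edge_boundary p n f / (real p ^ n * real (p - 1))"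
    unfolding edge_boundary_def sum_divide_distrib[symmetric]
    by (simp add: mult.assoc sum_distrib_left[symmetric] mult.commute)
  finally show ?thesis unfolding eq .
qed

definition unit_vec :: "nat \<Rightarrow> nat \<Rightarrow> nat \<Rightarrow> nat" where
  "unit_vec j a = (\<lambda>i. if i = j then a else 0)"

lemma weight_one_eq_image:
  assumes "p > 0"
  shows "weight_one p n = (\<lambda>(j, a). unit_vec j a) ` ({..<n} \<times> {1..<p})"
proof
  show "(\<lambda>(j, a). unit_vec j a) ` ({..<n} \<times> {1..<p}) \<subseteq> weight_one p n"
  proof clarify
    fix j a assume "j < n" "a \<in> {1..<p}"
    then have "supp_vec n (unit_vec j a) = {j}" "unit_vec j a \<in> cube p n"
      by (auto simp: supp_vec_def unit_vec_def cube_def)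
    then show "unit_vec j a \<in> weight_one p n" by (simp add: weight_one_def)
  qed
  show "weight_one p n \<subseteq> (\<lambda>(j, a). unit_vec j a) ` ({..<n} \<times> {1..<p})"
  proof
    fix z assume z: "z \<in> weight_one p n"
    then obtain j where j: "supp_vec n z = {j}"
      by (auto simp: weight_one_def card_1_singleton_iff)
    have zc: "z \<in> cube p n" using z by (simp add: weight_one_def)
    have "j < n" "z j \<noteq> 0" using j by (auto simp: supp_vec_def)
    moreover have "z = unit_vec j (z j)"
    proof
      fix i
      show "z i = unit_vec j (z j) i"
        using j zc by (cases "i < n") (auto simp: supp_vec_def unit_vec_def cube_def)
    qed
    moreover have "z j < p" using zc \<open>j < n\<close> by (simp add: cube_def)
    ultimately show "z \<in> (\<lambda>(j, a). unit_vec j a) ` ({..<n} \<times> {1..<p})"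
      by (intro image_eqI[where x = "(j, z j)"]) auto
  qed
qed

lemma inj_on_unit_vec: "inj_on (\<lambda>(j, a). unit_vec j a) ({..<n} \<times> {1..<p})"
  by (rule inj_onI) (auto simp: unit_vec_def fun_eq_iff split: if_splits)

lemma sum_weight_one:
  "p > 0 \<Longrightarrow> (\<Sum>z\<in>weight_one p n. g z) = (\<Sum>j<n. \<Sum>a\<in>{1..<p}. g (unit_vec j a))"
  unfolding weight_one_eq_image sum.reindex[OF inj_on_unit_vec] sum.cartesian_product
  by (simp add: case_prod_beta)

lemma vadd_unit_vec:
  "x \<in> cube p n \<Longrightarrow> j < n \<Longrightarrow> vadd p n x (unit_vec j a) = x(j := (x j + a) mod p)"
  by (auto simp: vadd_def unit_vec_def cube_def)

lemma vadd_unit_vec_inverse: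
  assumes "x \<in> cube p n" "a + b = p"
  shows "vadd p n (vadd p n x (unit_vec j a)) (unit_vec j b) = x"
proof
  fix i
  have "((x i + a) mod p + b) mod p = (x i + p) mod p"
    using assms(2) by (simp add: mod_add_left_eq add.assoc)
  then show "vadd p n (vadd p n x (unit_vec j a)) (unit_vec j b) i = x i"
    using assms(1) by (auto simp: vadd_def unit_vec_def cube_def)
qed

lemma sum_coord_neighbours_swap:
  assumes "p > 0"
  shows "(\<Sum>x\<in>cube p n. \<Sum>a\<in>{1..<p}. g (vadd p n x (unit_vec j a)) x)
       = (\<Sum>x\<in>cube p n. \<Sum>a\<in>{1..<p}. g x (vadd p n x (unit_vec j a)))"
proof -
  have "(\<Sum>x\<in>cube p n. g (vadd p n x (unit_vec j a)) x)
      = (\<Sum>y\<in>cube p n. g y (vadd p n y (unit_vec j (p - a))))" if "a \<in> {1..<p}" for a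
    using that assms
    by (intro sum.reindex_bij_witness[where i = "\<lambda>y. vadd p n y (unit_vec j (p - a))"
          and j = "\<lambda>x. vadd p n x (unit_vec j a)"])
      (auto simp: vadd_unit_vec_inverse vadd_in_cube)
  then have "(\<Sum>x\<in>cube p n. \<Sum>a\<in>{1..<p}. g (vadd p n x (unit_vec j a)) x)
      = (\<Sum>a\<in>{1..<p}. \<Sum>y\<in>cube p n. g y (vadd p n y (unit_vec j (p - a))))"
    by (subst sum.swap) simp
  also have "\<dots> = (\<Sum>a\<in>{1..<p}. \<Sum>y\<in>cube p n. g y (vadd p n y (unit_vec j a)))"
    by (rule sum.reindex_bij_witness[where i = "\<lambda>a. p - a" and j = "\<lambda>a. p - a"]) auto
  finally show ?thesis by (subst sum.swap)
qed

lemma influence_eq: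
  assumes p: "p \<ge> 2" and bool: "\<And>y. y \<in> cube p n \<Longrightarrow> f y \<in> {0, 1}" and j: "j < n"
  shows "influence p n j f
       = 2 * (\<Sum>x\<in>cube p n. f x * (\<Sum>a\<in>{1..<p}. 1 - f (vadd p n x (unit_vec j a))))
           / (real p ^ n * real (p - 1))"
proof -
  have p0: "p > 0" using p by simp
  let ?y = "\<lambda>x a. vadd p n x (unit_vec j a)"
  have "(if f x \<noteq> f (?y x a) then 1 else 0 :: real) = f x * (1 - f (?y x a)) + f (?y x a) * (1 - f x)"
    if "x \<in> cube p n" for x a
    using bool[OF that] bool[OF vadd_in_cube[OF p0, of n x "unit_vec j a"]] by auto
  then have "(\<Sum>x\<in>cube p n. \<Sum>a\<in>{1..<p}. (if f x \<noteq> f (x(j := (x j + a) mod p)) then 1 else 0 :: real))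
      = (\<Sum>x\<in>cube p n. \<Sum>a\<in>{1..<p}. f x * (1 - f (?y x a)))
        + (\<Sum>x\<in>cube p n. \<Sum>a\<in>{1..<p}. f (?y x a) * (1 - f x))"
    by (simp add: vadd_unit_vec[OF _ j] sum.distrib[symmetric])
  also have "(\<Sum>x\<in>cube p n. \<Sum>a\<in>{1..<p}. f (?y x a) * (1 - f x))
      = (\<Sum>x\<in>cube p n. \<Sum>a\<in>{1..<p}. f x * (1 - f (?y x a)))"
    by (rule sum_coord_neighbours_swap[OF p0, where g = "\<lambda>u v. f u * (1 - f v)"])
  finally have "(\<Sum>x\<in>cube p n. \<Sum>a\<in>{1..<p}. (if f x \<noteq> f (x(j := (x j + a) mod p)) then 1 else 0 :: real))
      = 2 * (\<Sum>x\<in>cube p n. f x * (\<Sum>a\<in>{1..<p}. 1 - f (?y x a)))"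
    by (simp add: sum_distrib_left fun_upd_def)
  then show ?thesis
    unfolding influence_def by (rule arg_cong[where f = "\<lambda>s. s / (real p ^ n * real (p - 1))"])
qed

lemma total_influence_eq_edge_boundary:
  assumes p: "p \<ge> 2" and bool: "\<And>y. y \<in> cube p n \<Longrightarrow> f y \<in> {0, 1}"
  shows "total_influence p n f = 2 * edge_boundary p n f / (real p ^ n * real (p - 1))"
proof -
  have "p > 0" using p by simp
  have "(\<Sum>j<n. \<Sum>x\<in>cube p n. f x * (\<Sum>a\<in>{1..<p}. 1 - f (vadd p n x (unit_vec j a))))
      = edge_boundary p n f"
    unfolding edge_boundary_def sum_weight_one[OF \<open>p > 0\<close>]
    by (subst sum.swap) (simp add: sum_distrib_left)
  then show ?thesis
    unfolding total_influence_def using influence_eq[OF p bool]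
    by (simp add: sum_divide_distrib[symmetric] sum_distrib_left[symmetric])
qed

subsection \<open>Large noise: the second-order term is the level-one weight\<close>

lemma powr_between_min_max:
  fixes a b t g :: real
  assumes "0 < a" "a \<le> t" "t \<le> b"
  shows "min (a powr g) (b powr g) \<le> t powr g" and "t powr g \<le> max (a powr g) (b powr g)"
proof -
  have "(a powr g \<le> t powr g \<and> t powr g \<le> b powr g) \<or> (b powr g \<le> t powr g \<and> t powr g \<le> a powr g)"
    using assms by (cases "g \<ge> 0") (auto intro: powr_mono2 powr_mono2')
  then show "min (a powr g) (b powr g) \<le> t powr g" "t powr g \<le> max (a powr g) (b powr g)"
    by auto
qed

lemma powr_taylor2:
  fixes y m \<alpha> :: real
  assumes y: "0 < y" and m: "0 < m"
  shows "\<exists>t. min y m \<le> t \<and> t \<le> max y m \<and>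
     y powr \<alpha> = m powr \<alpha> + \<alpha> * m powr (\<alpha> - 1) * (y - m) + \<alpha> * (\<alpha> - 1) / 2 * t powr (\<alpha> - 2) * (y - m)\<^sup>2"
proof (cases "y = m")
  case True
  then show ?thesis by (intro exI[of _ m]) simp
next
  case False
  define diff where "diff k t = (if k = 0 then t powr \<alpha> else if k = 1 then \<alpha> * t powr (\<alpha> - 1)
      else \<alpha> * (\<alpha> - 1) * t powr (\<alpha> - 2))" for k :: nat and t :: real
  have "DERIV (diff k) t :> diff (Suc k) t" if "k < 2" "min y m \<le> t" "t \<le> max y m" for k t
  proof -
    have t: "0 < t" using that y m by linarith
    have "DERIV (\<lambda>t. \<alpha> * t powr (\<alpha> - 1)) t :> \<alpha> * ((\<alpha> - 1) * t powr (\<alpha> - 1 - 1))"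
      by (intro DERIV_cmult has_real_derivative_powr t)
    moreover have "diff 0 = (\<lambda>t. t powr \<alpha>)" "diff (Suc 0) = (\<lambda>t. \<alpha> * t powr (\<alpha> - 1))"
      by (simp_all add: diff_def fun_eq_iff)
    ultimately show ?thesis
      using that has_real_derivative_powr[OF t, of \<alpha>]
      by (auto simp: diff_def less_2_cases_iff mult.assoc)
  qed
  then obtain t where t: "if y < m then y < t \<and> t < m else m < t \<and> t < y"
    "diff 0 y = (\<Sum>k<2. diff k m / fact k * (y - m) ^ k) + diff 2 t / fact 2 * (y - m) ^ 2"
    using Taylor[of 2 diff "diff 0" "min y m" "max y m" m y] False by auto
  then show ?thesis
    by (intro exI[of _ t]) (auto simp: diff_def numeral_2_eq_2 split: if_splits)
qed

lemma powr_taylor2_bounds: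
  fixes y m \<alpha> :: real
  assumes y: "0 < y" and m: "0 < m" and \<alpha>: "\<alpha> > 1"
  defines "c \<equiv> \<alpha> * (\<alpha> - 1) / 2"
  shows "c * min (y powr (\<alpha> - 2)) (m powr (\<alpha> - 2)) * (y - m)\<^sup>2
           \<le> y powr \<alpha> - m powr \<alpha> - \<alpha> * m powr (\<alpha> - 1) * (y - m)"
    and "y powr \<alpha> - m powr \<alpha> - \<alpha> * m powr (\<alpha> - 1) * (y - m)
           \<le> c * max (y powr (\<alpha> - 2)) (m powr (\<alpha> - 2)) * (y - m)\<^sup>2"
proof -
  obtain t where t: "min y m \<le> t" "t \<le> max y m"
    and eq: "y powr \<alpha> - m powr \<alpha> - \<alpha> * m powr (\<alpha> - 1) * (y - m) = c * t powr (\<alpha> - 2) * (y - m)\<^sup>2"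
    using powr_taylor2[OF y m, of \<alpha>] unfolding c_def by force
  have c: "0 \<le> c * (y - m)\<^sup>2" using \<alpha> by (simp add: c_def)
  have "min (y powr (\<alpha> - 2)) (m powr (\<alpha> - 2)) \<le> t powr (\<alpha> - 2)"
    "t powr (\<alpha> - 2) \<le> max (y powr (\<alpha> - 2)) (m powr (\<alpha> - 2))"
    using powr_between_min_max[of "min y m" t "max y m" "\<alpha> - 2"] y m t
    by (auto simp: min_def max_def split: if_splits)
  from this[THEN mult_left_mono, OF c] show
    "c * min (y powr (\<alpha> - 2)) (m powr (\<alpha> - 2)) * (y - m)\<^sup>2
       \<le> y powr \<alpha> - m powr \<alpha> - \<alpha> * m powr (\<alpha> - 1) * (y - m)"
    "y powr \<alpha> - m powr \<alpha> - \<alpha> * m powr (\<alpha> - 1) * (y - m)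
       \<le> c * max (y powr (\<alpha> - 2)) (m powr (\<alpha> - 2)) * (y - m)\<^sup>2"
    unfolding eq by (simp_all add: mult_ac)
qed

lemma powr_second_order_tendsto:
  fixes y r :: "'a \<Rightarrow> real"
  assumes m: "m > 0" and \<alpha>: "\<alpha> > 1" and lim: "((\<lambda>t. (y t - m) / r t) \<longlongrightarrow> A) F"
    and r0: "(r \<longlongrightarrow> 0) F" and rpos: "eventually (\<lambda>t. r t > 0) F"
  shows "((\<lambda>t. (y t powr \<alpha> - m powr \<alpha> - \<alpha> * m powr (\<alpha> - 1) * (y t - m)) / (r t)\<^sup>2)
           \<longlongrightarrow> \<alpha> * (\<alpha> - 1) / 2 * m powr (\<alpha> - 2) * A\<^sup>2) F"
proof -
  define c where "c = \<alpha> * (\<alpha> - 1) / 2"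
  define q where "q t = (y t - m) / r t" for t
  have "((\<lambda>t. m + r t * q t) \<longlongrightarrow> m + 0 * A) F"
    unfolding q_def by (intro tendsto_intros lim r0)
  moreover have "eventually (\<lambda>t. m + r t * q t = y t) F"
    using rpos by (rule eventually_mono) (simp add: q_def)
  ultimately have y: "(y \<longlongrightarrow> m) F"
    by (simp add: Lim_transform_eventually)
  have ypow: "((\<lambda>t. y t powr (\<alpha> - 2)) \<longlongrightarrow> m powr (\<alpha> - 2)) F"
    using m by (intro tendsto_powr' y tendsto_const) simp
  have bounds: "eventually (\<lambda>t.
        c * min (y t powr (\<alpha> - 2)) (m powr (\<alpha> - 2)) * (q t)\<^sup>2
          \<le> (y t powr \<alpha> - m powr \<alpha> - \<alpha> * m powr (\<alpha> - 1) * (y t - m)) / (r t)\<^sup>2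
      \<and> (y t powr \<alpha> - m powr \<alpha> - \<alpha> * m powr (\<alpha> - 1) * (y t - m)) / (r t)\<^sup>2
          \<le> c * max (y t powr (\<alpha> - 2)) (m powr (\<alpha> - 2)) * (q t)\<^sup>2) F"
    using order_tendstoD(1)[OF y m] rpos
  proof eventually_elim
    case (elim t)
    have "0 \<le> (r t)\<^sup>2" by simp
    from powr_taylor2_bounds[OF elim(1) m \<alpha>, folded c_def, THEN divide_right_mono, OF this]
    show ?case by (simp add: q_def power_divide)
  qed
  have lo: "((\<lambda>t. c * min (y t powr (\<alpha> - 2)) (m powr (\<alpha> - 2)) * (q t)\<^sup>2)
      \<longlongrightarrow> c * min (m powr (\<alpha> - 2)) (m powr (\<alpha> - 2)) * A\<^sup>2) F"
    unfolding q_def by (intro tendsto_intros ypow lim)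
  have hi: "((\<lambda>t. c * max (y t powr (\<alpha> - 2)) (m powr (\<alpha> - 2)) * (q t)\<^sup>2)
      \<longlongrightarrow> c * max (m powr (\<alpha> - 2)) (m powr (\<alpha> - 2)) * A\<^sup>2) F"
    unfolding q_def by (intro tendsto_intros ypow lim)
  show ?thesis
    using tendsto_sandwich[OF eventually_mono[OF bounds] eventually_mono[OF bounds] lo[simplified] hi[simplified]]
    unfolding c_def by auto
qed

lemma noise_corr_tendsto: "p \<ge> 2 \<Longrightarrow> (noise_corr p \<longlongrightarrow> 0) (at_left (1 - 1 / real p))"
  unfolding noise_corr_def
  by (rule tendsto_eq_intros refl | simp add: field_simps)+

lemma eventually_noise_corr_pos:
  assumes "p \<ge> 2"
  shows "eventually (\<lambda>\<epsilon>. noise_corr p \<epsilon> > 0) (at_left (1 - 1 / real p))"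
  unfolding eventually_at_left_field
proof (intro exI conjI allI impI)
  show "0 < 1 - 1 / real p" using assms by (simp add: field_simps)
  fix \<epsilon> assume "\<epsilon> < 1 - 1 / real p"
  with assms show "noise_corr p \<epsilon> > 0"
    by (simp add: noise_corr_def field_simps)
qed

definition level_one_part :: "nat \<Rightarrow> nat \<Rightarrow> ((nat \<Rightarrow> nat) \<Rightarrow> real) \<Rightarrow> (nat \<Rightarrow> nat) \<Rightarrow> complex" where
  "level_one_part p n f x = (\<Sum>\<xi>\<in>weight_one p n. fourier p n f \<xi> * character p n \<xi> x)"

lemma noise_op_level_one_tendsto_complex:
  assumes p: "p \<ge> 2"
  shows "((\<lambda>\<epsilon>. complex_of_real ((noise_op p n \<epsilon> f x - expect p n f) / noise_corr p \<epsilon>))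
           \<longlongrightarrow> level_one_part p n f x) (at_left (1 - 1 / real p))"
proof -
  let ?C = "cube p n - {\<lambda>_. 0}"
  let ?k = "\<lambda>\<xi>. card (supp_vec n \<xi>)"
  let ?g = "\<lambda>\<rho>. \<Sum>\<xi>\<in>?C. of_real (\<rho> ^ (?k \<xi> - 1)) * fourier p n f \<xi> * character p n \<xi> x"
  have ev: "eventually (\<lambda>\<epsilon>. ?g (noise_corr p \<epsilon>)
      = complex_of_real ((noise_op p n \<epsilon> f x - expect p n f) / noise_corr p \<epsilon>)) (at_left (1 - 1 / real p))"
    using eventually_noise_corr_pos[OF p]
  proof (rule eventually_mono)
    fix \<epsilon> assume \<rho>: "noise_corr p \<epsilon> > 0"
    have "noise_corr p \<epsilon> ^ ?k \<xi> = noise_corr p \<epsilon> * noise_corr p \<epsilon> ^ (?k \<xi> - 1)" if "\<xi> \<in> ?C" for \<xi>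
      using card_supp_vec_pos[of \<xi> p n] that by (simp flip: power_Suc)
    then show "?g (noise_corr p \<epsilon>)
        = complex_of_real ((noise_op p n \<epsilon> f x - expect p n f) / noise_corr p \<epsilon>)"
      using \<rho> unfolding of_real_divide noise_op_fourier_nonconstant[OF p] sum_divide_distrib
      by (intro sum.cong refl) simp
  qed
  have lim: "((\<lambda>\<epsilon>. ?g (noise_corr p \<epsilon>)) \<longlongrightarrow> ?g 0) (at_left (1 - 1 / real p))"
    by (intro tendsto_intros noise_corr_tendsto[OF p])
  have "?g 0 = (\<Sum>\<xi>\<in>?C. if ?k \<xi> = 1 then fourier p n f \<xi> * character p n \<xi> x else 0)"
  proof (intro sum.cong refl)
    fix \<xi> assume "\<xi> \<in> ?C"
    then have "?k \<xi> > 0" by (auto intro: card_supp_vec_pos)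
    then show "of_real (0 ^ (?k \<xi> - 1)) * fourier p n f \<xi> * character p n \<xi> x
        = (if ?k \<xi> = 1 then fourier p n f \<xi> * character p n \<xi> x else 0)"
      by auto
  qed
  also have "\<dots> = (\<Sum>\<xi>\<in>{\<xi>\<in>?C. ?k \<xi> = 1}. fourier p n f \<xi> * character p n \<xi> x)"
    by (rule sum.inter_filter[symmetric]) (simp add: finite_cube)
  also have "{\<xi>\<in>?C. ?k \<xi> = 1} = weight_one p n"
    by (auto simp: weight_one_def card_supp_vec_zero)
  finally have "?g 0 = level_one_part p n f x"
    unfolding level_one_part_def .
  with Lim_transform_eventually[OF lim ev] show ?thesis by simp
qed

lemma Im_level_one_part:
  assumes "p \<ge> 2"
  shows "Im (level_one_part p n f x) = 0"
proof -
  have "((\<lambda>_. 0) \<longlongrightarrow> Im (level_one_part p n f x)) (at_left (1 - 1 / real p))"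
    using tendsto_Im[OF noise_op_level_one_tendsto_complex[OF assms, of n f x]] by simp
  from tendsto_unique[OF _ this tendsto_const] show ?thesis by simp
qed

lemma noise_op_level_one_tendsto:
  "p \<ge> 2 \<Longrightarrow> ((\<lambda>\<epsilon>. (noise_op p n \<epsilon> f x - expect p n f) / noise_corr p \<epsilon>)
           \<longlongrightarrow> Re (level_one_part p n f x)) (at_left (1 - 1 / real p))"
  using tendsto_Re[OF noise_op_level_one_tendsto_complex] by simp

lemma sum_level_one_part_square:
  assumes p: "p \<ge> 2"
  shows "(\<Sum>x\<in>cube p n. (Re (level_one_part p n f x))\<^sup>2) = real p ^ n * W1 p n f"
proof -
  have "(Re (level_one_part p n f x))\<^sup>2 = (cmod (level_one_part p n f x))\<^sup>2" for x
    by (simp add: cmod_power2 Im_level_one_part[OF p])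
  then show ?thesis
    using sum_norm_square_character_sum[of p "weight_one p n" n "fourier p n f"] p
    by (simp add: level_one_part_def W1_def weight_one_def)
qed

lemma noise_moment_large_noise_tendsto:
  assumes p: "p \<ge> 2" and \<alpha>: "\<alpha> > 1" and m: "expect p n f > 0"
  shows "((\<lambda>\<epsilon>. (noise_moment p n \<alpha> \<epsilon> f - expect p n f powr \<alpha>) / (noise_corr p \<epsilon>)\<^sup>2)
           \<longlongrightarrow> \<alpha> * (\<alpha> - 1) / 2 * expect p n f powr (\<alpha> - 2) * W1 p n f) (at_left (1 - 1 / real p))"
proof -
  define m where "m = expect p n f"
  define c where "c = \<alpha> * (\<alpha> - 1) / 2 * m powr (\<alpha> - 2)"
  define T where "T \<epsilon> x = noise_op p n \<epsilon> f x" for \<epsilon> x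
  define R where "R \<epsilon> x = (T \<epsilon> x powr \<alpha> - m powr \<alpha> - \<alpha> * m powr (\<alpha> - 1) * (T \<epsilon> x - m)) / (noise_corr p \<epsilon>)\<^sup>2"
    for \<epsilon> x
  have R: "((\<lambda>\<epsilon>. R \<epsilon> x) \<longlongrightarrow> c * (Re (level_one_part p n f x))\<^sup>2) (at_left (1 - 1 / real p))" for x
    unfolding R_def T_def m_def c_def
    using m \<alpha> noise_op_level_one_tendsto[OF p] noise_corr_tendsto[OF p] eventually_noise_corr_pos[OF p]
    by (rule powr_second_order_tendsto)
  then have "((\<lambda>\<epsilon>. (\<Sum>x\<in>cube p n. R \<epsilon> x) / real p ^ n) \<longlongrightarrow> c * W1 p n f)
      (at_left (1 - 1 / real p))"
  proof -
    have "((\<lambda>\<epsilon>. (\<Sum>x\<in>cube p n. R \<epsilon> x) / real p ^ n) \<longlongrightarrow>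
        (\<Sum>x\<in>cube p n. c * (Re (level_one_part p n f x))\<^sup>2) / real p ^ n) (at_left (1 - 1 / real p))"
      using p by (intro tendsto_intros R) simp
    then show ?thesis
      using p by (simp add: sum_distrib_left[symmetric] sum_level_one_part_square[OF p])
  qed
  moreover have "(\<Sum>x\<in>cube p n. R \<epsilon> x) / real p ^ n
      = (noise_moment p n \<alpha> \<epsilon> f - m powr \<alpha>) / (noise_corr p \<epsilon>)\<^sup>2" for \<epsilon>
  proof -
    have "(\<Sum>x\<in>cube p n. T \<epsilon> x - m) = 0"
      using p by (simp add: T_def m_def sum_subtractf sum_noise_op expect_def card_cube)
    then have "(\<Sum>x\<in>cube p n. R \<epsilon> x)
        = ((\<Sum>x\<in>cube p n. T \<epsilon> x powr \<alpha>) - real p ^ n * m powr \<alpha>) / (noise_corr p \<epsilon>)\<^sup>2"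
      unfolding R_def sum_divide_distrib[symmetric]
      by (simp add: sum_subtractf sum_distrib_left[symmetric] card_cube)
    then show ?thesis
      using p by (simp add: noise_moment_def expect_def T_def field_simps)
  qed
  ultimately show ?thesis
    by (simp add: m_def c_def)
qed

subsection \<open>Maximizers of the noise moment\<close>

lemma eventually_maximizers_maximize_limit:
  fixes \<Phi> :: "'t \<Rightarrow> 'a \<Rightarrow> real"
  assumes B: "finite B"
    and lim: "\<And>f. f \<in> B \<Longrightarrow> ((\<lambda>t. (\<Phi> t f - c) / g t) \<longlongrightarrow> L f) F"
    and g: "eventually (\<lambda>t. g t > 0) F"
  shows "eventually (\<lambda>t. \<forall>f\<in>B. (\<forall>h\<in>B. \<Phi> t h \<le> \<Phi> t f) \<longrightarrow> (\<forall>h\<in>B. L h \<le> L f)) F"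
proof -
  have "eventually (\<lambda>t. L f < L h \<longrightarrow> \<Phi> t f < \<Phi> t h) F" if "f \<in> B" "h \<in> B" for f h
  proof (cases "L f < L h")
    case True
    have "((\<lambda>t. (\<Phi> t h - c) / g t - (\<Phi> t f - c) / g t) \<longlongrightarrow> L h - L f) F"
      by (intro tendsto_diff lim that)
    moreover have "0 < L h - L f" using True by simp
    ultimately have "eventually (\<lambda>t. 0 < (\<Phi> t h - c) / g t - (\<Phi> t f - c) / g t) F"
      by (rule order_tendstoD(1))
    with g show ?thesis
      by eventually_elim (simp add: diff_divide_distrib[symmetric] zero_less_divide_iff)
  qed simp
  then have "eventually (\<lambda>t. \<forall>(f, h)\<in>B \<times> B. L f < L h \<longrightarrow> \<Phi> t f < \<Phi> t h) F"
    using B by (intro eventually_ball_finite) auto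
  then show ?thesis
    by (rule eventually_mono) (force simp: not_less[symmetric])
qed

lemma boolfuns_boolean: "f \<in> boolfuns p n m \<Longrightarrow> y \<in> cube p n \<Longrightarrow> f y \<in> {0, 1}"
  by (simp add: boolfuns_def)

lemma finite_boolfuns: "finite (boolfuns p n m)"
proof (rule inj_on_finite[where f = "\<lambda>f. {x\<in>cube p n. f x = 1}" and B = "Pow (cube p n)"])
  show "inj_on (\<lambda>f. {x\<in>cube p n. f x = 1}) (boolfuns p n m)"
  proof (rule inj_onI)
    fix f g assume f: "f \<in> boolfuns p n m" and g: "g \<in> boolfuns p n m"
      and eq: "{x\<in>cube p n. f x = 1} = {x\<in>cube p n. g x = 1}"
    show "f = g"
    proof
      fix x
      show "f x = g x"
      proof (cases "x \<in> cube p n")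
        case True
        then have "f x \<in> {0, 1}" "g x \<in> {0, 1}" "f x = 1 \<longleftrightarrow> g x = 1"
          using f g eq by (auto simp: boolfuns_def)
        then show ?thesis by auto
      next
        case False
        then show ?thesis using f g by (simp add: boolfuns_def)
      qed
    qed
  qed
  show "(\<lambda>f. {x\<in>cube p n. f x = 1}) ` boolfuns p n m \<subseteq> Pow (cube p n)" by blast
  show "finite (Pow (cube p n))" by (simp add: finite_cube)
qed

lemma boolfuns_zero:
  assumes "p > 0"
  shows "boolfuns p n 0 = {\<lambda>_. 0}"
proof -
  have "f = (\<lambda>_. 0)" if f: "f \<in> boolfuns p n 0" for f
  proof -
    have "0 \<le> f x" if "x \<in> cube p n" for x
      using boolfuns_boolean[OF f that] by auto
    moreover have "(\<Sum>x\<in>cube p n. f x) = 0"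
      using f assms by (simp add: boolfuns_def expect_def)
    ultimately have "\<forall>x\<in>cube p n. f x = 0"
      by (simp add: sum_nonneg_eq_0_iff finite_cube)
    then show ?thesis
      using f by (auto simp: boolfuns_def)
  qed
  then show ?thesis
    by (auto simp: boolfuns_def expect_def)
qed

lemma eventually_small_noise_maximizers_minimize_influence:
  assumes p: "p \<ge> 2" and \<alpha>: "\<alpha> > 1"
  shows "eventually (\<lambda>\<epsilon>. \<forall>f\<in>boolfuns p n m.
           (\<forall>g\<in>boolfuns p n m. noise_moment p n \<alpha> \<epsilon> g \<le> noise_moment p n \<alpha> \<epsilon> f) \<longrightarrow>
           total_influence p n f = Min (total_influence p n ` boolfuns p n m)) (at_right 0)"
proof -
  let ?B = "boolfuns p n m" and ?M = "\<lambda>\<epsilon>. noise_moment p n \<alpha> \<epsilon>" and ?I = "total_influence p n"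
  have "((\<lambda>\<epsilon>. (?M \<epsilon> f - m) / \<epsilon>) \<longlongrightarrow> - (\<alpha> / 2) * ?I f) (at_right 0)" if f: "f \<in> ?B" for f
  proof -
    note bool = boolfuns_boolean[OF f]
    have "expect p n f = m" using f by (simp add: boolfuns_def)
    then have "(\<lambda>\<epsilon>. (?M \<epsilon> f - m) / \<epsilon>) = (\<lambda>\<epsilon>. - ((expect p n f - ?M \<epsilon> f) / \<epsilon>))"
      by (simp add: fun_eq_iff diff_divide_distrib)
    moreover have "- (\<alpha> / 2) * ?I f = - (\<alpha> * edge_boundary p n f / (real p ^ n * real (p - 1)))"
      by (simp add: total_influence_eq_edge_boundary[OF p bool])
    ultimately show ?thesis
      using tendsto_minus[OF noise_moment_small_noise_tendsto[OF p \<alpha> bool]] by simp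
  qed
  then have "eventually (\<lambda>\<epsilon>. \<forall>f\<in>?B. (\<forall>h\<in>?B. ?M \<epsilon> h \<le> ?M \<epsilon> f) \<longrightarrow>
      (\<forall>h\<in>?B. - (\<alpha> / 2) * ?I h \<le> - (\<alpha> / 2) * ?I f)) (at_right 0)"
    by (rule eventually_maximizers_maximize_limit[OF finite_boolfuns _ eventually_at_right_less])
  then show ?thesis
  proof (rule eventually_mono, intro ballI impI)
    fix \<epsilon> f assume "f \<in> ?B" "\<forall>h\<in>?B. ?M \<epsilon> h \<le> ?M \<epsilon> f"
      and "\<forall>f\<in>?B. (\<forall>h\<in>?B. ?M \<epsilon> h \<le> ?M \<epsilon> f) \<longrightarrow> (\<forall>h\<in>?B. - (\<alpha> / 2) * ?I h \<le> - (\<alpha> / 2) * ?I f)"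
    with \<alpha> show "?I f = Min (?I ` ?B)"
      by (intro Min_eqI[symmetric]) (auto simp: finite_boolfuns)
  qed
qed

lemma eventually_large_noise_maximizers_maximize_W1:
  assumes p: "p \<ge> 2" and \<alpha>: "\<alpha> > 1" and m: "m \<ge> 0"
  shows "eventually (\<lambda>\<epsilon>. \<forall>f\<in>boolfuns p n m.
           (\<forall>g\<in>boolfuns p n m. noise_moment p n \<alpha> \<epsilon> g \<le> noise_moment p n \<alpha> \<epsilon> f) \<longrightarrow>
           W1 p n f = Max (W1 p n ` boolfuns p n m)) (at_left (1 - 1 / real p))"
proof (cases "m = 0")
  case True
  with p show ?thesis by (simp add: boolfuns_zero)
next
  case False
  let ?B = "boolfuns p n m" and ?M = "\<lambda>\<epsilon>. noise_moment p n \<alpha> \<epsilon>"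
  define C where "C = \<alpha> * (\<alpha> - 1) / 2 * m powr (\<alpha> - 2)"
  have C: "C > 0" using \<alpha> m False by (simp add: C_def)
  have "((\<lambda>\<epsilon>. (?M \<epsilon> f - m powr \<alpha>) / (noise_corr p \<epsilon>)\<^sup>2) \<longlongrightarrow> C * W1 p n f)
      (at_left (1 - 1 / real p))" if f: "f \<in> ?B" for f
  proof -
    have "expect p n f = m" using f by (simp add: boolfuns_def)
    then show ?thesis
      using noise_moment_large_noise_tendsto[OF p \<alpha>, of n f] m False by (simp add: C_def)
  qed
  moreover have "eventually (\<lambda>\<epsilon>. (noise_corr p \<epsilon>)\<^sup>2 > 0) (at_left (1 - 1 / real p))"
    using eventually_noise_corr_pos[OF p] by (rule eventually_mono) simp
  ultimately have "eventually (\<lambda>\<epsilon>. \<forall>f\<in>?B. (\<forall>h\<in>?B. ?M \<epsilon> h \<le> ?M \<epsilon> f) \<longrightarrow>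
      (\<forall>h\<in>?B. C * W1 p n h \<le> C * W1 p n f)) (at_left (1 - 1 / real p))"
    by (rule eventually_maximizers_maximize_limit[OF finite_boolfuns])
  then show ?thesis
  proof (rule eventually_mono, intro ballI impI)
    fix \<epsilon> f assume "f \<in> ?B" "\<forall>h\<in>?B. ?M \<epsilon> h \<le> ?M \<epsilon> f"
      and "\<forall>f\<in>?B. (\<forall>h\<in>?B. ?M \<epsilon> h \<le> ?M \<epsilon> f) \<longrightarrow> (\<forall>h\<in>?B. C * W1 p n h \<le> C * W1 p n f)"
    with C show "W1 p n f = Max (W1 p n ` ?B)"
      by (intro Max_eqI[symmetric]) (auto simp: finite_boolfuns)
  qed
qed

lemma eventually_at_right_0_imp_interval:
  fixes c :: real
  assumes "eventually P (at_right 0)" and "c > 0"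
  shows "\<exists>\<epsilon>0>0. \<epsilon>0 \<le> c \<and> (\<forall>\<epsilon>. 0 < \<epsilon> \<and> \<epsilon> < \<epsilon>0 \<longrightarrow> P \<epsilon>)"
proof -
  obtain b where "b > 0" "\<forall>\<epsilon>>0. \<epsilon> < b \<longrightarrow> P \<epsilon>"
    using assms(1) unfolding eventually_at_right_field by blast
  with assms(2) show ?thesis
    by (intro exI[of _ "min b c"]) auto
qed

lemma eventually_at_left_imp_interval:
  fixes c :: real
  assumes "eventually P (at_left c)" and "c > 0"
  shows "\<exists>\<epsilon>1. 0 \<le> \<epsilon>1 \<and> \<epsilon>1 < c \<and> (\<forall>\<epsilon>. \<epsilon>1 < \<epsilon> \<and> \<epsilon> < c \<longrightarrow> P \<epsilon>)"
proof -
  obtain b where "b < c" "\<forall>\<epsilon>>b. \<epsilon> < c \<longrightarrow> P \<epsilon>"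
    using assms(1) unfolding eventually_at_left_field by blast
  with assms(2) show ?thesis
    by (intro exI[of _ "max b 0"]) auto
qed

theorem theorem4:
  fixes p n j :: nat and \<alpha> :: real
  assumes "p \<ge> 2" and "n \<ge> 1" and "\<alpha> > 1" and "j \<le> p ^ n"
  defines "m \<equiv> real j / real p ^ n"
  shows "(\<exists>\<epsilon>0>0. \<epsilon>0 \<le> 1 - 1 / real p \<and>
           (\<forall>\<epsilon>. 0 < \<epsilon> \<and> \<epsilon> < \<epsilon>0 \<longrightarrow>
              (\<forall>f\<in>boolfuns p n m.
                 (\<forall>g\<in>boolfuns p n m. noise_moment p n \<alpha> \<epsilon> g \<le> noise_moment p n \<alpha> \<epsilon> f) \<longrightarrow>
                 total_influence p n f = Min (total_influence p n ` boolfuns p n m))))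
       \<and> (\<exists>\<epsilon>1. 0 \<le> \<epsilon>1 \<and> \<epsilon>1 < 1 - 1 / real p \<and>
           (\<forall>\<epsilon>. \<epsilon>1 < \<epsilon> \<and> \<epsilon> < 1 - 1 / real p \<longrightarrow>
              (\<forall>f\<in>boolfuns p n m.
                 (\<forall>g\<in>boolfuns p n m. noise_moment p n \<alpha> \<epsilon> g \<le> noise_moment p n \<alpha> \<epsilon> f) \<longrightarrow>
                 W1 p n f = Max (W1 p n ` boolfuns p n m))))"
proof -
  have "0 < 1 - 1 / real p" "m \<ge> 0"
    using assms(1) by (simp_all add: m_def field_simps)
  then show ?thesis
    using eventually_at_right_0_imp_interval[OF eventually_small_noise_maximizers_minimize_influence]
      eventually_at_left_imp_interval[OF eventually_large_noise_maximizers_maximize_W1]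
      assms(1,3) by blast
qed

end
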